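(* Let $n\ge1$ and $d\ge2$ be integers. Let $T$ be any rooted tree that contains, as a topological minor, every rooted tree with $n$ leaves and no degree-1 nodes. Then the number of nodes of $T$ of degree at least $d$ is at least $$\sum_{s\ge2,\ (s-1)(d-1)+1\le n} u\big(\lfloor n/((s-1)(d-1)+1)\rfloor\big).$$ Here $u(m)$ denotes the minimum number of leaves of a rooted tree that contains, as a topological minor, every rooted tree with $m$ leaves and no degree-1 nodes.
   Context: Trees are rooted and unordered, with edges directed from parent to child. The degree of a node is its number of children; a degree-1 node has exactly one child. $T'$ is a topological minor of $T$ if there is an injective map $f$ from the nodes of $T'$ to the nodes of $T$ with $f(\mathsf{NCA}(u,v))=\mathsf{NCA}(f(u),f(v))$ for all $u,v$. Equivalently, $T$ contains a subdivision of $T'$ as a subgraph. $\mathsf{NCA}$ denotes the nearest common ancestor. *)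

theory Defs
  imports Main
begin

definition rooted_tree :: "nat set \<Rightarrow> (nat \<times> nat) set \<Rightarrow> nat \<Rightarrow> bool" where
  "rooted_tree V E r \<longleftrightarrow>
     finite V \<and> r \<in> V \<and> E \<subseteq> V \<times> V \<and>
     (\<nexists>p. (p, r) \<in> E) \<and>
     (\<forall>v\<in>V - {r}. \<exists>!p. (p, v) \<in> E) \<and>
     (\<forall>v\<in>V. (r, v) \<in> E\<^sup>*)"

definition children :: "(nat \<times> nat) set \<Rightarrow> nat \<Rightarrow> nat set" where
  "children E v = {w. (v, w) \<in> E}"

definition degree :: "(nat \<times> nat) set \<Rightarrow> nat \<Rightarrow> nat" where
  "degree E v = card (children E v)"

definition leaves :: "nat set \<Rightarrow> (nat \<times> nat) set \<Rightarrow> nat set" where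
  "leaves V E = {v \<in> V. children E v = {}}"

definition is_nca :: "(nat \<times> nat) set \<Rightarrow> nat \<Rightarrow> nat \<Rightarrow> nat \<Rightarrow> bool" where
  "is_nca E u v w \<longleftrightarrow> (w, u) \<in> E\<^sup>* \<and> (w, v) \<in> E\<^sup>* \<and>
     (\<forall>w'. (w', u) \<in> E\<^sup>* \<and> (w', v) \<in> E\<^sup>* \<longrightarrow> (w', w) \<in> E\<^sup>*)"

definition nca :: "(nat \<times> nat) set \<Rightarrow> nat \<Rightarrow> nat \<Rightarrow> nat" where
  "nca E u v = (THE w. is_nca E u v w)"

definition top_minor :: "nat set \<Rightarrow> (nat \<times> nat) set \<Rightarrow> nat set \<Rightarrow> (nat \<times> nat) set \<Rightarrow> bool" where
  "top_minor V' E' V E \<longleftrightarrow>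
     (\<exists>f. inj_on f V' \<and> f ` V' \<subseteq> V \<and>
          (\<forall>u\<in>V'. \<forall>v\<in>V'. f (nca E' u v) = nca E (f u) (f v)))"

definition universal :: "nat \<Rightarrow> nat set \<Rightarrow> (nat \<times> nat) set \<Rightarrow> nat \<Rightarrow> bool" where
  "universal m V E r \<longleftrightarrow> rooted_tree V E r \<and>
     (\<forall>V' E' r'. rooted_tree V' E' r' \<and> card (leaves V' E') = m \<and>
        (\<forall>v\<in>V'. degree E' v \<noteq> 1) \<longrightarrow> top_minor V' E' V E)"

definition u :: "nat \<Rightarrow> nat" where
  "u m = (LEAST k. \<exists>V E r. universal m V E r \<and> card (leaves V E) = k)"

end

(*
  For j >= 1 let P_j be the set of nodes of T below which (the node itself included) there is
  a descending chain of j nodes of degree at least d.  P_j is closed under ancestors and so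
  induces a subtree T_j.  Every tree with m = n div (j (d - 1) + 1) leaves and no unary nodes
  embeds into T_j: hang below each of its leaves a chain of j stars with d children each, pad the
  root up to n leaves and embed the result into T; an NCA-preserving embedding preserves
  ancestry and does not decrease degrees, so the images of the old leaves, and hence of all old
  nodes, lie in P_j.  Thus T_j has at least u(m) leaves.  A leaf of T_j has degree at least d
  and lies outside P_(j+1), so the leaf sets of T_1, T_2, ... are pairwise disjoint sets of
  nodes of degree at least d; taking j = s - 1 gives the bound.
*)

theory Submission
  imports Defs
begin

section \<open>Rooted trees\<close>

lemma rooted_treeD:
  assumes "rooted_tree V E r"
  shows "finite V" "r \<in> V" "E \<subseteq> V \<times> V" "(p, r) \<notin> E" "v \<in> V \<Longrightarrow> (r, v) \<in> E\<^sup>*"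
  using assms by (auto simp: rooted_tree_def)

lemma rooted_tree_parent_unique:
  assumes "rooted_tree V E r" "(p, v) \<in> E" "(q, v) \<in> E"
  shows "p = q"
proof -
  have "v \<in> V - {r}" using rooted_treeD(3,4)[OF assms(1)] assms(2) by auto
  then have "\<exists>!p. (p, v) \<in> E" using assms(1) unfolding rooted_tree_def by blast
  then show ?thesis using assms(2,3) by blast
qed

lemma rooted_tree_acyclic:
  assumes "rooted_tree V E r"
  shows "acyclic E"
proof -
  have "(v, v) \<notin> E\<^sup>+" if "(r, v) \<in> E\<^sup>*" for v
    using that
  proof (induction rule: rtrancl_induct)
    case base
    show ?case using rooted_treeD(4)[OF assms] by (metis tranclD2)
  next
    case (step y z)
    show ?case
    proof
      assume "(z, z) \<in> E\<^sup>+"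
      then obtain p where "(z, p) \<in> E\<^sup>*" "(p, z) \<in> E" by (metis tranclD2)
      moreover have "p = y" using rooted_tree_parent_unique[OF assms \<open>(p, z) \<in> E\<close> step.hyps(2)] .
      ultimately have "(y, y) \<in> E\<^sup>+" using step.hyps(2) by (meson rtrancl_into_trancl2)
      then show False using step.IH by simp
    qed
  qed
  moreover have "(v, v) \<in> E\<^sup>+ \<Longrightarrow> v \<in> V" for v
    using rooted_treeD(3)[OF assms] by (auto dest: tranclD)
  ultimately show ?thesis using rooted_treeD(5)[OF assms] unfolding acyclic_def by blast
qed

lemma rooted_tree_ancestor_antisym:
  assumes "rooted_tree V E r" "(a, b) \<in> E\<^sup>*" "(b, a) \<in> E\<^sup>*"
  shows "a = b"
proof (rule ccontr)
  assume "a \<noteq> b"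
  then have "(a, b) \<in> E\<^sup>+" using assms(2) by (simp add: rtrancl_eq_or_trancl)
  then have "(a, a) \<in> E\<^sup>+" using assms(3) by (rule trancl_rtrancl_trancl)
  then show False using rooted_tree_acyclic[OF assms(1)] unfolding acyclic_def by blast
qed

lemma rooted_tree_ancestors_linear:
  assumes "rooted_tree V E r" "(a, t) \<in> E\<^sup>*" "(b, t) \<in> E\<^sup>*"
  shows "(a, b) \<in> E\<^sup>* \<or> (b, a) \<in> E\<^sup>*"
  using assms(2,3)
proof (induction arbitrary: b rule: rtrancl_induct)
  case (step y z)
  from step.prems show ?case
  proof (rule rtranclE)
    fix p assume "(b, p) \<in> E\<^sup>*" "(p, z) \<in> E"
    moreover have "p = y" using rooted_tree_parent_unique[OF assms(1) \<open>(p, z) \<in> E\<close> step.hyps(2)] .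
    ultimately show ?thesis using step.IH by auto
  qed (use step.hyps in auto)
qed auto

lemma rooted_tree_ancestor_of_child:
  assumes "rooted_tree V E r" "(a, c) \<in> E\<^sup>*" "(w, c) \<in> E"
  shows "a = c \<or> (a, w) \<in> E\<^sup>*"
  using assms(2)
proof (rule rtranclE)
  fix p assume "(a, p) \<in> E\<^sup>*" "(p, c) \<in> E"
  then show ?thesis using rooted_tree_parent_unique[OF assms(1) \<open>(p, c) \<in> E\<close> assms(3)] by auto
qed auto

lemma rooted_tree_exists_lowest:
  assumes "rooted_tree V E r" "C \<noteq> {}"
  shows "\<exists>w\<in>C. \<forall>c. (w, c) \<in> E \<longrightarrow> c \<notin> C"
proof -
  have "finite (V \<times> V)" using rooted_treeD(1)[OF assms(1)] by simp
  then have "finite E" using rooted_treeD(3)[OF assms(1)] by (rule finite_subset[rotated])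
  then have "wf (E\<inverse>)"
    using rooted_tree_acyclic[OF assms(1)] by (rule finite_acyclic_wf_converse)
  moreover obtain x where "x \<in> C" using assms(2) by blast
  ultimately obtain w where "w \<in> C" "\<And>c. (c, w) \<in> E\<inverse> \<Longrightarrow> c \<notin> C"
    by (rule wfE_min) blast
  then show ?thesis by blast
qed

lemma nca_eqI:
  assumes "rooted_tree V E r" "is_nca E a b w"
  shows "nca E a b = w"
  unfolding nca_def
proof (rule the_equality)
  fix w' assume "is_nca E a b w'"
  then show "w' = w"
    using assms rooted_tree_ancestor_antisym unfolding is_nca_def by blast
qed fact

lemma nca_ancestor:
  assumes "rooted_tree V E r" "(x, y) \<in> E\<^sup>*"
  shows "nca E x y = x"
  using assms by (intro nca_eqI) (auto simp: is_nca_def)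

lemma is_nca_nca:
  assumes "rooted_tree V E r" "x \<in> V" "y \<in> V"
  shows "is_nca E x y (nca E x y)"
proof -
  let ?C = "{w. (w, x) \<in> E\<^sup>* \<and> (w, y) \<in> E\<^sup>*}"
  have "r \<in> ?C" using rooted_treeD(5)[OF assms(1)] assms(2,3) by blast
  then obtain w where w: "w \<in> ?C" and lowest: "\<And>c. (w, c) \<in> E \<Longrightarrow> c \<notin> ?C"
    using rooted_tree_exists_lowest[OF assms(1), of ?C] by blast
  have "(a, w) \<in> E\<^sup>*" if "a \<in> ?C" for a
  proof -
    have "(a, w) \<in> E\<^sup>* \<or> (w, a) \<in> E\<^sup>*"
      using rooted_tree_ancestors_linear[OF assms(1)] w that by blast
    moreover have "(w, a) \<notin> E\<^sup>+"
    proof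
      assume "(w, a) \<in> E\<^sup>+"
      then obtain c where "(w, c) \<in> E" "(c, a) \<in> E\<^sup>*" by (blast dest: tranclD)
      then show False using lowest that by (blast intro: rtrancl_trans)
    qed
    ultimately show ?thesis by (auto simp: rtrancl_eq_or_trancl)
  qed
  then have "is_nca E x y w" using w unfolding is_nca_def by blast
  then show ?thesis using nca_eqI[OF assms(1)] by simp
qed

lemma rooted_tree_leaf_below:
  assumes "rooted_tree V E r" "x \<in> V"
  shows "\<exists>l\<in>leaves V E. (x, l) \<in> E\<^sup>*"
proof -
  obtain l where l: "(x, l) \<in> E\<^sup>*" and "\<And>c. (l, c) \<in> E \<Longrightarrow> (x, c) \<notin> E\<^sup>*"
    using rooted_tree_exists_lowest[OF assms(1), of "{y. (x, y) \<in> E\<^sup>*}"] by blast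
  then have "children E l = {}" using l unfolding children_def by (auto intro: rtrancl_into_rtrancl)
  moreover have "l \<in> V"
    using l assms(2) rooted_treeD(3)[OF assms(1)] by (induction rule: rtrancl_induct) auto
  ultimately show ?thesis using l unfolding leaves_def by blast
qed

lemma ancestor_in_nodes:
  assumes "rooted_tree V E r" "(a, b) \<in> E\<^sup>*" "b \<in> V"
  shows "a \<in> V"
  using assms(2) by (rule converse_rtranclE) (use assms rooted_treeD(3)[OF assms(1)] in auto)

lemma children_subset_nodes:
  assumes "rooted_tree V E r"
  shows "children E v \<subseteq> V"
  using rooted_treeD(3)[OF assms] unfolding children_def by auto

lemma children_outside_nodes:
  assumes "rooted_tree V E r" "v \<notin> V"
  shows "children E v = {}"
  using rooted_treeD(3)[OF assms(1)] assms(2) unfolding children_def by auto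

lemma finite_children:
  assumes "rooted_tree V E r"
  shows "finite (children E v)"
  using children_subset_nodes[OF assms] rooted_treeD(1)[OF assms] by (rule finite_subset)

lemma finite_leaves:
  assumes "rooted_tree V E r"
  shows "finite (leaves V E)"
  using rooted_treeD(1)[OF assms] unfolding leaves_def by simp

lemma rooted_tree_childless_root:
  assumes "rooted_tree V E r" "children E r = {}"
  shows "V = {r}"
proof -
  have "v = r" if "v \<in> V" for v
    using rooted_treeD(5)[OF assms(1) that] assms(2) unfolding children_def
    by (auto elim: converse_rtranclE)
  then show ?thesis using rooted_treeD(2)[OF assms(1)] by blast
qed

section \<open>Extensions and restrictions\<close>

text \<open>New edges never end in an old node, so old nodes keep their ancestors.\<close>
definition tree_extension ::
  "nat set \<Rightarrow> (nat \<times> nat) set \<Rightarrow> nat set \<Rightarrow> (nat \<times> nat) set \<Rightarrow> bool" where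
  "tree_extension V E V' E' \<longleftrightarrow>
     V \<subseteq> V' \<and> E \<subseteq> E' \<and> (\<forall>a b. (a, b) \<in> E' \<longrightarrow> b \<in> V \<longrightarrow> (a, b) \<in> E)"

lemma tree_extension_refl: "tree_extension V E V E"
  unfolding tree_extension_def by blast

lemma tree_extension_trans:
  assumes "rooted_tree V E r" "tree_extension V E V' E'" "tree_extension V' E' V'' E''"
  shows "tree_extension V E V'' E''"
  using assms rooted_treeD(3)[OF assms(1)] unfolding tree_extension_def by blast

lemma tree_extension_ancestor_iff:
  assumes "rooted_tree V E r" "tree_extension V E V' E'" "b \<in> V"
  shows "(a, b) \<in> E'\<^sup>* \<longleftrightarrow> (a, b) \<in> E\<^sup>*"
proof
  assume "(a, b) \<in> E'\<^sup>*"
  then show "(a, b) \<in> E\<^sup>*"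
    using assms(3)
  proof (induction rule: converse_rtrancl_induct)
    case (step a c)
    then have "(c, b) \<in> E\<^sup>*" by blast
    then have "c \<in> V" using ancestor_in_nodes[OF assms(1)] step.prems by blast
    then have "(a, c) \<in> E" using step.hyps(1) assms(2) unfolding tree_extension_def by blast
    then show ?case using \<open>(c, b) \<in> E\<^sup>*\<close> by (rule converse_rtrancl_into_rtrancl)
  qed simp
next
  assume "(a, b) \<in> E\<^sup>*"
  then show "(a, b) \<in> E'\<^sup>*"
    using assms(2) rtrancl_mono unfolding tree_extension_def by blast
qed

lemma tree_extension_nca:
  assumes "rooted_tree V E r" "tree_extension V E V' E'" "x \<in> V" "y \<in> V"
  shows "nca E' x y = nca E x y"
proof -
  have "is_nca E' x y w \<longleftrightarrow> is_nca E x y w" for w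
  proof (cases "(w, x) \<in> E\<^sup>*")
    case True
    then have "w \<in> V" using ancestor_in_nodes[OF assms(1)] assms(3) by blast
    then show ?thesis
      using tree_extension_ancestor_iff[OF assms(1,2)] assms(3,4) unfolding is_nca_def by simp
  next
    case False
    then show ?thesis
      using tree_extension_ancestor_iff[OF assms(1,2) assms(3)] unfolding is_nca_def by simp
  qed
  then have "is_nca E' x y = is_nca E x y" by (rule ext)
  then show ?thesis unfolding nca_def by simp
qed

lemma tree_extension_degree_mono:
  assumes "rooted_tree V' E' r'" "tree_extension V E V' E'"
  shows "degree E v \<le> degree E' v"
  unfolding degree_def
  by (rule card_mono[OF finite_children[OF assms(1)]])
    (use assms(2) in \<open>auto simp: tree_extension_def children_def\<close>)

definition ancestor_closed :: "(nat \<times> nat) set \<Rightarrow> nat set \<Rightarrow> bool" where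
  "ancestor_closed E W \<longleftrightarrow> (\<forall>a b. (a, b) \<in> E\<^sup>* \<longrightarrow> b \<in> W \<longrightarrow> a \<in> W)"

lemma rooted_tree_restrict:
  assumes "rooted_tree V E r" "W \<subseteq> V" "W \<noteq> {}" "ancestor_closed E W"
  shows "rooted_tree W (E \<inter> W \<times> W) r" "tree_extension W (E \<inter> W \<times> W) V E"
proof -
  have closed: "a \<in> W" if "(a, b) \<in> E\<^sup>*" "b \<in> W" for a b
    using assms(4) that unfolding ancestor_closed_def by blast
  note T = rooted_treeD[OF assms(1)]
  obtain w where "w \<in> W" using assms(3) by blast
  then have "r \<in> W" using closed T(5) assms(2) by blast
  have reach: "(r, v) \<in> (E \<inter> W \<times> W)\<^sup>*" if "v \<in> W" for v
  proof -
    have "(r, v) \<in> E\<^sup>*" using T(5) that assms(2) by blast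
    then show ?thesis using that
    proof (induction rule: rtrancl_induct)
      case (step y z)
      then have "y \<in> W" using closed by blast
      then show ?case using step by (blast intro: rtrancl_into_rtrancl)
    qed simp
  qed
  have "\<exists>!p. (p, v) \<in> E \<inter> W \<times> W" if "v \<in> W - {r}" for v
  proof -
    have "\<exists>!p. (p, v) \<in> E" using that assms(1,2) unfolding rooted_tree_def by blast
    then obtain p where "(p, v) \<in> E" "\<And>q. (q, v) \<in> E \<Longrightarrow> q = p" by blast
    moreover have "p \<in> W" using closed \<open>(p, v) \<in> E\<close> that by blast
    ultimately show ?thesis using that by blast
  qed
  moreover have "finite W" using T(1) assms(2) by (rule finite_subset[rotated])
  ultimately show "rooted_tree W (E \<inter> W \<times> W) r"
    using reach \<open>r \<in> W\<close> T(4) unfolding rooted_tree_def by blast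
  show "tree_extension W (E \<inter> W \<times> W) V E"
    using assms(2) closed unfolding tree_extension_def by blast
qed

lemma fresh_nodes:
  assumes "finite V"
  obtains K :: "nat set" where "finite K" "card K = k" "K \<inter> V = {}"
proof -
  have "infinite (UNIV - V)" using assms by (simp add: Diff_infinite_finite)
  then obtain K where "K \<subseteq> UNIV - V" "finite K" "card K = k"
    using infinite_arbitrarily_large by blast
  then show ?thesis using that by blast
qed

lemma rooted_tree_attach:
  assumes "rooted_tree V E r" "x \<in> V" "finite K" "K \<inter> V = {}"
  shows "rooted_tree (V \<union> K) (E \<union> {x} \<times> K) r" "tree_extension V E (V \<union> K) (E \<union> {x} \<times> K)"
proof -
  let ?E = "E \<union> {x} \<times> K"
  note T = rooted_treeD[OF assms(1)]
  have "\<exists>!p. (p, v) \<in> ?E" if "v \<in> V \<union> K - {r}" for v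
  proof (cases "v \<in> V")
    case True
    then have "\<exists>!p. (p, v) \<in> E" using that assms(1) unfolding rooted_tree_def by blast
    moreover have "(p, v) \<in> ?E \<longleftrightarrow> (p, v) \<in> E" for p using True assms(4) by auto
    ultimately show ?thesis by simp
  next
    case False
    then show ?thesis using that T(3) by auto
  qed
  moreover have "(r, v) \<in> ?E\<^sup>*" if "v \<in> V \<union> K" for v
  proof -
    have "(r, v) \<in> ?E\<^sup>*" if "v \<in> V" for v using T(5)[OF that] rtrancl_mono[of E ?E] by blast
    moreover have "(x, v) \<in> ?E" if "v \<in> K" for v using that by blast
    ultimately show ?thesis using \<open>v \<in> V \<union> K\<close> assms(2) by (blast intro: rtrancl_into_rtrancl)
  qed
  ultimately show "rooted_tree (V \<union> K) ?E r"
    using T assms(2-4) unfolding rooted_tree_def by auto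
  show "tree_extension V E (V \<union> K) ?E"
    using assms(4) unfolding tree_extension_def by auto
qed

lemma children_attach:
  "children (E \<union> {x} \<times> K) v = children E v \<union> (if v = x then K else {})"
  unfolding children_def by auto

lemma degree_attach:
  assumes "rooted_tree V E r" "finite K" "K \<inter> V = {}"
  shows "degree (E \<union> {x} \<times> K) v = (if v = x then degree E v + card K else degree E v)"
proof -
  have "children E v \<inter> K = {}" using children_subset_nodes[OF assms(1)] assms(3) by blast
  then show ?thesis
    unfolding degree_def children_attach using card_Un_disjoint finite_children[OF assms(1)] assms(2)
    by auto
qed

lemma degree_attach_new:
  assumes "rooted_tree V E r" "x \<in> V" "K \<inter> V = {}" "v \<in> K"
  shows "degree (E \<union> {x} \<times> K) v = 0"
proof -
  have "v \<notin> V" using assms(3,4) by blast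
  then show ?thesis
    using assms(2) children_outside_nodes[OF assms(1)] unfolding degree_def children_attach by auto
qed

lemma leaves_attach:
  assumes "rooted_tree V E r" "x \<in> V" "K \<inter> V = {}" "K \<noteq> {} \<or> x \<notin> leaves V E"
  shows "leaves (V \<union> K) (E \<union> {x} \<times> K) = leaves V E - {x} \<union> K"
  using assms children_outside_nodes[OF assms(1)] unfolding leaves_def children_attach by auto

section \<open>Heavy chains\<close>

definition heavy_chain :: "(nat \<times> nat) set \<Rightarrow> nat \<Rightarrow> nat \<Rightarrow> nat \<Rightarrow> bool" where
  "heavy_chain E d j v \<longleftrightarrow> (\<exists>cs. length cs = j \<and> (\<forall>c\<in>set cs. d \<le> degree E c) \<and>
     sorted_wrt (\<lambda>a b. (a, b) \<in> E\<^sup>+) cs \<and> (cs \<noteq> [] \<longrightarrow> (v, hd cs) \<in> E\<^sup>*))"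

lemma heavy_chain_0: "heavy_chain E d 0 v"
  unfolding heavy_chain_def by simp

lemma heavy_chain_parent:
  assumes "heavy_chain E d j c" "(x, c) \<in> E" "d \<le> degree E x"
  shows "heavy_chain E d (Suc j) x"
proof -
  obtain cs where cs: "length cs = j" "\<forall>c\<in>set cs. d \<le> degree E c"
      "sorted_wrt (\<lambda>a b. (a, b) \<in> E\<^sup>+) cs" "cs \<noteq> [] \<longrightarrow> (c, hd cs) \<in> E\<^sup>*"
    using assms(1) unfolding heavy_chain_def by blast
  have "(x, b) \<in> E\<^sup>+" if "b \<in> set cs" for b
  proof -
    have "(hd cs, b) \<in> E\<^sup>*" using cs(3) that by (cases cs) auto
    then show ?thesis using cs(4) that assms(2) by (auto intro: rtrancl_into_trancl2 rtrancl_trans)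
  qed
  then have "length (x # cs) = Suc j \<and> (\<forall>c\<in>set (x # cs). d \<le> degree E c) \<and>
      sorted_wrt (\<lambda>a b. (a, b) \<in> E\<^sup>+) (x # cs) \<and> (x, hd (x # cs)) \<in> E\<^sup>*"
    using cs assms(3) by simp
  then show ?thesis unfolding heavy_chain_def by blast
qed

lemma heavy_chain_ancestor:
  assumes "(a, b) \<in> E\<^sup>*" "heavy_chain E d j b"
  shows "heavy_chain E d j a"
  using assms(2) rtrancl_trans[OF assms(1)] unfolding heavy_chain_def by blast

lemma heavy_chain_shorter:
  assumes "i \<le> j" "heavy_chain E d j v"
  shows "heavy_chain E d i v"
proof -
  obtain cs where cs: "length cs = j" "\<forall>c\<in>set cs. d \<le> degree E c"
      "sorted_wrt (\<lambda>a b. (a, b) \<in> E\<^sup>+) cs" "cs \<noteq> [] \<longrightarrow> (v, hd cs) \<in> E\<^sup>*"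
    using assms(2) unfolding heavy_chain_def by blast
  then have "length (take i cs) = i \<and> (\<forall>c\<in>set (take i cs). d \<le> degree E c) \<and>
      sorted_wrt (\<lambda>a b. (a, b) \<in> E\<^sup>+) (take i cs) \<and>
      (take i cs \<noteq> [] \<longrightarrow> (v, hd (take i cs)) \<in> E\<^sup>*)"
    using assms(1) by (auto simp: sorted_wrt_take dest: in_set_takeD)
  then show ?thesis unfolding heavy_chain_def by blast
qed

lemma heavy_chain_extension:
  assumes "rooted_tree V' E' r'" "tree_extension V E V' E'" "heavy_chain E d j v"
  shows "heavy_chain E' d j v"
proof -
  have sub: "E \<subseteq> E'" using assms(2) unfolding tree_extension_def by blast
  obtain cs where cs: "length cs = j" "\<forall>c\<in>set cs. d \<le> degree E c"
      "sorted_wrt (\<lambda>a b. (a, b) \<in> E\<^sup>+) cs" "cs \<noteq> [] \<longrightarrow> (v, hd cs) \<in> E\<^sup>*"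
    using assms(3) unfolding heavy_chain_def by blast
  have "\<forall>c\<in>set cs. d \<le> degree E' c"
    using cs(2) tree_extension_degree_mono[OF assms(1,2)] le_trans by blast
  moreover have "sorted_wrt (\<lambda>a b. (a, b) \<in> E'\<^sup>+) cs"
    using cs(3) trancl_mono[OF _ sub] by (rule sorted_wrt_mono_rel[rotated]) blast
  moreover have "cs \<noteq> [] \<longrightarrow> (v, hd cs) \<in> E'\<^sup>*" using cs(4) rtrancl_mono[OF sub] by blast
  ultimately show ?thesis using cs(1) unfolding heavy_chain_def by blast
qed

lemma sprout_leaf:
  assumes "rooted_tree V E r" "x \<in> leaves V E" "\<forall>v\<in>V. degree E v \<noteq> 1" "d \<ge> 2"
  obtains V' E' c where "rooted_tree V' E' r" "tree_extension V E V' E'"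
    "\<forall>v\<in>V'. degree E' v \<noteq> 1" "card (leaves V' E') = card (leaves V E) + (d - 1)"
    "d \<le> degree E' x" "(x, c) \<in> E'" "c \<in> leaves V' E'" "leaves V E - {x} \<subseteq> leaves V' E' - {c}"
proof -
  obtain K where K: "finite K" "card K = d" "K \<inter> V = {}"
    using fresh_nodes[OF rooted_treeD(1)[OF assms(1)]] .
  then obtain c where "c \<in> K" using assms(4) by fastforce
  have x: "x \<in> V" "degree E x = 0" using assms(2) unfolding leaves_def degree_def by auto
  let ?E = "E \<union> {x} \<times> K"
  have leaves: "leaves (V \<union> K) ?E = leaves V E - {x} \<union> K"
    using leaves_attach[OF assms(1) x(1) K(3)] \<open>c \<in> K\<close> by blast
  have "card (leaves V E - {x} \<union> K) = card (leaves V E) - 1 + d"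
    using K assms(2) finite_leaves[OF assms(1)] leaves_def
    by (subst card_Un_disjoint) (auto simp: card_Diff_singleton)
  moreover have "card (leaves V E) \<ge> 1"
    using assms(2) finite_leaves[OF assms(1)] by (metis card_0_eq empty_iff less_one not_le)
  ultimately have card: "card (leaves (V \<union> K) ?E) = card (leaves V E) + (d - 1)"
    unfolding leaves using assms(4) by linarith
  have no_unary: "\<forall>v\<in>V \<union> K. degree ?E v \<noteq> 1"
  proof
    fix v assume "v \<in> V \<union> K"
    then show "degree ?E v \<noteq> 1"
      using degree_attach_new[OF assms(1) x(1) K(3)] assms(3,4) x K(2)
      by (cases "v \<in> K") (auto simp: degree_attach[OF assms(1) K(1,3)])
  qed
  have "d \<le> degree ?E x" using degree_attach[OF assms(1) K(1,3)] K(2) by simp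
  moreover have "leaves V E - {x} \<subseteq> leaves (V \<union> K) ?E - {c}"
    using leaves \<open>c \<in> K\<close> K(3) leaves_def by auto
  ultimately show ?thesis
    using that rooted_tree_attach[OF assms(1) x(1) K(1,3)] card no_unary leaves \<open>c \<in> K\<close>
    by blast
qed

lemma grow_heavy_chain:
  assumes "rooted_tree V E r" "x \<in> leaves V E" "\<forall>v\<in>V. degree E v \<noteq> 1" "d \<ge> 2"
  obtains V' E' where "rooted_tree V' E' r" "tree_extension V E V' E'"
    "\<forall>v\<in>V'. degree E' v \<noteq> 1" "card (leaves V' E') = card (leaves V E) + Suc j * (d - 1)"
    "leaves V E - {x} \<subseteq> leaves V' E'" "heavy_chain E' d (Suc j) x"
  using assms
proof (induction j arbitrary: V E x thesis)
  case 0
  obtain V' E' c where S: "rooted_tree V' E' r" "tree_extension V E V' E'"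
    "\<forall>v\<in>V'. degree E' v \<noteq> 1" "card (leaves V' E') = card (leaves V E) + (d - 1)"
    "d \<le> degree E' x" "(x, c) \<in> E'" "leaves V E - {x} \<subseteq> leaves V' E' - {c}"
    using sprout_leaf[OF "0.prems"(2-5)] by metis
  have "heavy_chain E' d (Suc 0) x" using heavy_chain_parent[OF heavy_chain_0 S(6,5)] .
  then show ?case using "0.prems"(1) S by auto
next
  case (Suc j)
  obtain V1 E1 c where S: "rooted_tree V1 E1 r" "tree_extension V E V1 E1"
    "\<forall>v\<in>V1. degree E1 v \<noteq> 1" "card (leaves V1 E1) = card (leaves V E) + (d - 1)"
    "d \<le> degree E1 x" "(x, c) \<in> E1" "c \<in> leaves V1 E1" "leaves V E - {x} \<subseteq> leaves V1 E1 - {c}"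
    using sprout_leaf[OF Suc.prems(2-5)] by metis
  obtain V2 E2 where T: "rooted_tree V2 E2 r" "tree_extension V1 E1 V2 E2"
    "\<forall>v\<in>V2. degree E2 v \<noteq> 1" "card (leaves V2 E2) = card (leaves V1 E1) + Suc j * (d - 1)"
    "leaves V1 E1 - {c} \<subseteq> leaves V2 E2" "heavy_chain E2 d (Suc j) c"
    using Suc.IH[OF _ S(1,7,3) Suc.prems(5)] by metis
  have "(x, c) \<in> E2" using S(6) T(2) unfolding tree_extension_def by blast
  moreover have "d \<le> degree E2 x" using S(5) tree_extension_degree_mono[OF T(1,2)] by (rule le_trans)
  ultimately have "heavy_chain E2 d (Suc (Suc j)) x" using heavy_chain_parent[OF T(6)] by blast
  moreover have "tree_extension V E V2 E2" using tree_extension_trans[OF Suc.prems(2) S(2) T(2)] .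
  ultimately show ?case using Suc.prems(1) T S(4,8) by auto
qed

lemma grow_heavy_chains:
  assumes "finite S" "S \<subseteq> leaves V E" "rooted_tree V E r" "\<forall>v\<in>V. degree E v \<noteq> 1" "d \<ge> 2"
  obtains V' E' where "rooted_tree V' E' r" "tree_extension V E V' E'"
    "\<forall>v\<in>V'. degree E' v \<noteq> 1" "card (leaves V' E') = card (leaves V E) + card S * (Suc j * (d - 1))"
    "leaves V E - S \<subseteq> leaves V' E'" "\<forall>x\<in>S. heavy_chain E' d (Suc j) x"
  using assms(1,2)
proof (induction S arbitrary: thesis rule: finite_induct)
  case empty
  then show ?case using assms(3,4) tree_extension_refl by auto
next
  case (insert x S)
  obtain V1 E1 where T: "rooted_tree V1 E1 r" "tree_extension V E V1 E1"
    "\<forall>v\<in>V1. degree E1 v \<noteq> 1" "card (leaves V1 E1) = card (leaves V E) + card S * (Suc j * (d - 1))"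
    "leaves V E - S \<subseteq> leaves V1 E1" "\<forall>y\<in>S. heavy_chain E1 d (Suc j) y"
    using insert.IH insert.prems(2) by (metis insert_subset)
  have "x \<in> leaves V1 E1" using T(5) insert.hyps(2) insert.prems(2) by blast
  then obtain V2 E2 where U: "rooted_tree V2 E2 r" "tree_extension V1 E1 V2 E2"
    "\<forall>v\<in>V2. degree E2 v \<noteq> 1" "card (leaves V2 E2) = card (leaves V1 E1) + Suc j * (d - 1)"
    "leaves V1 E1 - {x} \<subseteq> leaves V2 E2" "heavy_chain E2 d (Suc j) x"
    using grow_heavy_chain[OF T(1) _ T(3) assms(5)] by metis
  have "tree_extension V E V2 E2" using tree_extension_trans[OF assms(3) T(2) U(2)] .
  moreover have "\<forall>y\<in>insert x S. heavy_chain E2 d (Suc j) y"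
    using U(6) T(6) heavy_chain_extension[OF U(1,2)] by blast
  moreover have "leaves V E - insert x S \<subseteq> leaves V2 E2" using T(5) U(5) by blast
  ultimately show ?case using insert.prems(1) insert.hyps U(1,3,4) T(4) by simp
qed

lemma pad_root:
  assumes "rooted_tree V E r" "\<forall>v\<in>V. degree E v \<noteq> 1" "2 \<le> card (leaves V E)"
    "card (leaves V E) \<le> n"
  obtains V' E' where "rooted_tree V' E' r" "tree_extension V E V' E'" "card (leaves V' E') = n"
    "\<forall>v\<in>V'. degree E' v \<noteq> 1"
proof -
  have r: "r \<in> V" using rooted_treeD(2)[OF assms(1)] .
  have root_inner: "children E r \<noteq> {}"
  proof
    assume "children E r = {}"
    then have "leaves V E \<subseteq> {r}" using rooted_tree_childless_root[OF assms(1)] unfolding leaves_def by blast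
    then have "card (leaves V E) \<le> 1" using card_mono[of "{r}"] by fastforce
    then show False using assms(3) by simp
  qed
  then have "degree E r \<noteq> 0" using finite_children[OF assms(1)] unfolding degree_def by simp
  moreover have "degree E r \<noteq> 1" using assms(2) r by blast
  ultimately have "degree E r \<ge> 2" by linarith
  obtain K where K: "finite K" "card K = n - card (leaves V E)" "K \<inter> V = {}"
    using fresh_nodes[OF rooted_treeD(1)[OF assms(1)]] .
  let ?E = "E \<union> {r} \<times> K"
  have leaves: "leaves (V \<union> K) ?E = leaves V E \<union> K"
    using leaves_attach[OF assms(1) r K(3)] root_inner unfolding leaves_def by auto
  have "card (leaves (V \<union> K) ?E) = n"
    unfolding leaves using K assms(4) finite_leaves[OF assms(1)] leaves_def
    by (subst card_Un_disjoint) auto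
  moreover have "\<forall>v\<in>V \<union> K. degree ?E v \<noteq> 1"
  proof
    fix v assume "v \<in> V \<union> K"
    then show "degree ?E v \<noteq> 1"
      using degree_attach_new[OF assms(1) r K(3)] assms(2) \<open>degree E r \<ge> 2\<close>
      by (cases "v \<in> K") (auto simp: degree_attach[OF assms(1) K(1,3)])
  qed
  ultimately show ?thesis using that rooted_tree_attach[OF assms(1) r K(1,3)] by blast
qed

lemma grow_tree:
  assumes "rooted_tree V E r" "\<forall>v\<in>V. degree E v \<noteq> 1" "d \<ge> 2"
    "card (leaves V E) * (Suc j * (d - 1) + 1) \<le> n"
  obtains V' E' where "rooted_tree V' E' r" "tree_extension V E V' E'" "card (leaves V' E') = n"
    "\<forall>v\<in>V'. degree E' v \<noteq> 1" "\<forall>l\<in>leaves V E. heavy_chain E' d (Suc j) l"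
proof -
  let ?m = "card (leaves V E)"
  obtain V1 E1 where T: "rooted_tree V1 E1 r" "tree_extension V E V1 E1"
    "\<forall>v\<in>V1. degree E1 v \<noteq> 1" "card (leaves V1 E1) = ?m + ?m * (Suc j * (d - 1))"
    "\<forall>l\<in>leaves V E. heavy_chain E1 d (Suc j) l"
    using grow_heavy_chains[OF finite_leaves[OF assms(1)] subset_refl assms(1,2,3)] by metis
  have "?m \<ge> 1"
    using rooted_tree_leaf_below[OF assms(1) rooted_treeD(2)[OF assms(1)]] finite_leaves[OF assms(1)]
    by (auto simp: Suc_le_eq card_gt_0_iff)
  moreover have "Suc j * (d - 1) \<ge> 1" using assms(3) by simp
  ultimately have "?m * (Suc j * (d - 1)) \<ge> 1" using mult_le_mono by fastforce
  then have "2 \<le> card (leaves V1 E1)" using T(4) \<open>?m \<ge> 1\<close> by linarith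
  moreover have "card (leaves V1 E1) \<le> n" using T(4) assms(4) by (simp add: algebra_simps)
  ultimately obtain V2 E2 where P: "rooted_tree V2 E2 r" "tree_extension V1 E1 V2 E2"
    "card (leaves V2 E2) = n" "\<forall>v\<in>V2. degree E2 v \<noteq> 1"
    using pad_root[OF T(1,3)] by metis
  have "tree_extension V E V2 E2" using tree_extension_trans[OF assms(1) T(2) P(2)] .
  moreover have "\<forall>l\<in>leaves V E. heavy_chain E2 d (Suc j) l"
    using T(5) heavy_chain_extension[OF P(1,2)] by blast
  ultimately show ?thesis using that P(1,3,4) by blast
qed

lemma exists_tree_without_unary_nodes:
  assumes "m \<ge> 1"
  obtains V E r where "rooted_tree V E r" "card (leaves V E) = m" "\<forall>v\<in>V. degree E v \<noteq> 1"
proof -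
  have T: "rooted_tree {0} {} 0" unfolding rooted_tree_def by simp
  have L: "leaves {0} {} = {0}" unfolding leaves_def children_def by simp
  have D: "\<forall>v\<in>{0}. degree {} v \<noteq> 1" unfolding degree_def children_def by simp
  show ?thesis
  proof (cases "m = 1")
    case True
    then show ?thesis using that[OF T] L D by simp
  next
    case False
    then have "2 \<le> m" using assms by simp
    moreover have "0 \<in> leaves {0} {}" using L by simp
    ultimately obtain V E c where "rooted_tree V E 0" "card (leaves V E) = card (leaves {0} {}) + (m - 1)"
      "\<forall>v\<in>V. degree E v \<noteq> 1"
      using sprout_leaf[OF T _ D] by metis
    then show ?thesis using that L assms by simp
  qed
qed

section \<open>NCA-preserving embeddings\<close>

definition nca_embedding ::
  "(nat \<Rightarrow> nat) \<Rightarrow> nat set \<Rightarrow> (nat \<times> nat) set \<Rightarrow> nat set \<Rightarrow> (nat \<times> nat) set \<Rightarrow> bool" where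
  "nca_embedding f V' E' V E \<longleftrightarrow> inj_on f V' \<and> f ` V' \<subseteq> V \<and>
     (\<forall>x\<in>V'. \<forall>y\<in>V'. f (nca E' x y) = nca E (f x) (f y))"

lemma top_minor_iff_nca_embedding: "top_minor V' E' V E \<longleftrightarrow> (\<exists>f. nca_embedding f V' E' V E)"
  unfolding top_minor_def nca_embedding_def ..

lemma nca_embedding_ancestor:
  assumes "rooted_tree V E r" "nca_embedding f V' E' V E" "rooted_tree V' E' r'"
    "x \<in> V'" "y \<in> V'" "(x, y) \<in> E'\<^sup>*"
  shows "(f x, f y) \<in> E\<^sup>*"
proof -
  have "f x = nca E (f x) (f y)"
    using nca_ancestor[OF assms(3,6)] assms(2,4,5) unfolding nca_embedding_def by metis
  moreover have "f x \<in> V" "f y \<in> V" using assms(2,4,5) unfolding nca_embedding_def by auto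
  ultimately show ?thesis using is_nca_nca[OF assms(1)] unfolding is_nca_def by metis
qed

lemma nca_embedding_strict_ancestor:
  assumes "rooted_tree V E r" "nca_embedding f V' E' V E" "rooted_tree V' E' r'"
    "x \<in> V'" "y \<in> V'" "(x, y) \<in> E'\<^sup>+"
  shows "(f x, f y) \<in> E\<^sup>+"
proof -
  have "x \<noteq> y" using assms(6) rooted_tree_acyclic[OF assms(3)] unfolding acyclic_def by blast
  then have "f x \<noteq> f y" using assms(2,4,5) unfolding nca_embedding_def inj_on_def by blast
  moreover have "(f x, f y) \<in> E\<^sup>*" using nca_embedding_ancestor[OF assms(1-5) trancl_into_rtrancl[OF assms(6)]] .
  ultimately show ?thesis by (simp add: rtrancl_eq_or_trancl)
qed

text \<open>Distinct children of w have NCA w, so the paths from f w to their images leave f w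
  through distinct children.\<close>
lemma nca_embedding_degree:
  assumes "rooted_tree V E r" "nca_embedding f V' E' V E" "rooted_tree V' E' r'" "w \<in> V'"
  shows "degree E' w \<le> degree E (f w)"
proof -
  note acyclic = rooted_tree_acyclic[unfolded acyclic_def]
  have child: "(w, c) \<in> E'" "c \<in> V'" if "c \<in> children E' w" for c
    using that rooted_treeD(3)[OF assms(3)] unfolding children_def by auto
  define g where "g c = (SOME y. (f w, y) \<in> E \<and> (y, f c) \<in> E\<^sup>*)" for c
  have g: "(f w, g c) \<in> E \<and> (g c, f c) \<in> E\<^sup>*" if "c \<in> children E' w" for c
  proof -
    have "(f w, f c) \<in> E\<^sup>+" using nca_embedding_strict_ancestor[OF assms(1-4)] child[OF that] by blast
    then have "\<exists>y. (f w, y) \<in> E \<and> (y, f c) \<in> E\<^sup>*" by (rule tranclD)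
    then show ?thesis unfolding g_def by (rule someI_ex)
  qed
  have "inj_on g (children E' w)"
  proof (rule inj_onI, rule ccontr)
    fix c1 c2 assume c: "c1 \<in> children E' w" "c2 \<in> children E' w" "g c1 = g c2" "c1 \<noteq> c2"
    have "is_nca E' c1 c2 w"
      unfolding is_nca_def
    proof (intro conjI allI impI)
      fix a assume a: "(a, c1) \<in> E'\<^sup>* \<and> (a, c2) \<in> E'\<^sup>*"
      have "a = c1 \<or> (a, w) \<in> E'\<^sup>*" "a = c2 \<or> (a, w) \<in> E'\<^sup>*"
        using a rooted_tree_ancestor_of_child[OF assms(3)] child c(1,2) by blast+
      then show "(a, w) \<in> E'\<^sup>*" using c(4) by blast
    qed (use child c in auto)
    then have "f w = nca E (f c1) (f c2)"
      using nca_eqI[OF assms(3)] child c(1,2) assms(2) unfolding nca_embedding_def by metis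
    moreover have "f c1 \<in> V" "f c2 \<in> V" using child c(1,2) assms(2) unfolding nca_embedding_def by auto
    ultimately have "(g c1, f w) \<in> E\<^sup>*"
      using is_nca_nca[OF assms(1)] g c unfolding is_nca_def by metis
    then show False using g[OF c(1)] acyclic[OF assms(1)] by (meson rtrancl_into_trancl2)
  qed
  moreover have "g ` children E' w \<subseteq> children E (f w)" using g unfolding children_def by auto
  ultimately show ?thesis
    unfolding degree_def using card_inj_on_le finite_children[OF assms(1)] by metis
qed

lemma nca_embedding_heavy_chain:
  assumes "rooted_tree V E r" "nca_embedding f V' E' V E" "rooted_tree V' E' r'" "l \<in> V'"
    "d \<ge> 1" "heavy_chain E' d j l"
  shows "heavy_chain E d j (f l)"
proof -
  obtain cs where cs: "length cs = j" "\<forall>c\<in>set cs. d \<le> degree E' c"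
      "sorted_wrt (\<lambda>a b. (a, b) \<in> E'\<^sup>+) cs" "cs \<noteq> [] \<longrightarrow> (l, hd cs) \<in> E'\<^sup>*"
    using assms(6) unfolding heavy_chain_def by blast
  have in_V': "c \<in> V'" if "c \<in> set cs" for c
  proof -
    have "children E' c \<noteq> {}" using cs(2) that assms(5) unfolding degree_def by fastforce
    then show ?thesis using rooted_treeD(3)[OF assms(3)] unfolding children_def by auto
  qed
  have "\<forall>c\<in>set (map f cs). d \<le> degree E c"
    using cs(2) in_V' nca_embedding_degree[OF assms(1-3)] le_trans by fastforce
  moreover have "sorted_wrt (\<lambda>a b. (f a, f b) \<in> E\<^sup>+) cs"
    using nca_embedding_strict_ancestor[OF assms(1-3)] in_V'
    by (intro sorted_wrt_mono_rel[OF _ cs(3)]) blast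
  then have "sorted_wrt (\<lambda>a b. (a, b) \<in> E\<^sup>+) (map f cs)" by (simp add: sorted_wrt_map)
  moreover have "map f cs \<noteq> [] \<longrightarrow> (f l, hd (map f cs)) \<in> E\<^sup>*"
    using cs(4) in_V' nca_embedding_ancestor[OF assms(1-4)] by (cases cs) auto
  ultimately show ?thesis using cs(1) unfolding heavy_chain_def by (metis length_map)
qed

lemma nca_embedding_tree_extension:
  assumes "rooted_tree V' E' r'" "tree_extension V' E' V'' E''" "nca_embedding f V'' E'' V E"
  shows "nca_embedding f V' E' V E"
proof -
  have "V' \<subseteq> V''" using assms(2) unfolding tree_extension_def by blast
  then show ?thesis
    using assms(3) tree_extension_nca[OF assms(1,2)] inj_on_subset[of f V'' V']
    unfolding nca_embedding_def by (metis (no_types, lifting) image_mono order_trans subsetD)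
qed

lemma nca_embedding_restrict_range:
  assumes "rooted_tree V E r" "W \<subseteq> V" "W \<noteq> {}" "ancestor_closed E W"
    and "nca_embedding f V' E' V E" "f ` V' \<subseteq> W"
  shows "nca_embedding f V' E' W (E \<inter> W \<times> W)"
proof -
  note R = rooted_tree_restrict[OF assms(1-4)]
  have "nca (E \<inter> W \<times> W) (f x) (f y) = nca E (f x) (f y)" if "x \<in> V'" "y \<in> V'" for x y
  proof -
    have "f x \<in> W" "f y \<in> W" using that assms(6) by auto
    then show ?thesis using tree_extension_nca[OF R] by simp
  qed
  then show ?thesis using assms(5,6) unfolding nca_embedding_def by simp
qed

section \<open>Chain cores\<close>

text \<open>The set P_j of the proof idea; its leaves are the nodes counted for s = j + 1.\<close>
definition chain_core :: "nat set \<Rightarrow> (nat \<times> nat) set \<Rightarrow> nat \<Rightarrow> nat \<Rightarrow> nat set" where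
  "chain_core V E d j = {v \<in> V. heavy_chain E d j v}"

lemma chain_core_ancestor_closed:
  assumes "rooted_tree V E r"
  shows "ancestor_closed E (chain_core V E d j)"
  using ancestor_in_nodes[OF assms] heavy_chain_ancestor
  unfolding ancestor_closed_def chain_core_def by blast

lemma chain_core_leaf:
  assumes "rooted_tree V E r" "j \<ge> 1"
    "v \<in> leaves (chain_core V E d j) (E \<inter> chain_core V E d j \<times> chain_core V E d j)"
  shows "d \<le> degree E v" "\<not> heavy_chain E d (Suc j) v"
proof -
  have "v \<in> V" "heavy_chain E d j v" using assms(3) unfolding leaves_def chain_core_def by auto
  have below: False if vb: "(v, b) \<in> E\<^sup>+" and b: "heavy_chain E d j b" for b
  proof -
    obtain c where "(v, c) \<in> E" "(c, b) \<in> E\<^sup>*" using tranclD[OF vb] by blast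
    moreover have "c \<in> V" using \<open>(v, c) \<in> E\<close> rooted_treeD(3)[OF assms(1)] by blast
    ultimately have "c \<in> chain_core V E d j"
      using heavy_chain_ancestor b unfolding chain_core_def by blast
    then show False
      using \<open>(v, c) \<in> E\<close> assms(3) unfolding leaves_def children_def chain_core_def by blast
  qed
  have at_head: "heavy_chain E d (length cs) (hd cs)"
    if "sorted_wrt (\<lambda>a b. (a, b) \<in> E\<^sup>+) cs" "\<forall>c\<in>set cs. d \<le> degree E c" for cs
    using that unfolding heavy_chain_def by blast
  obtain cs where cs: "length cs = j" "\<forall>c\<in>set cs. d \<le> degree E c"
      "sorted_wrt (\<lambda>a b. (a, b) \<in> E\<^sup>+) cs" "cs \<noteq> [] \<longrightarrow> (v, hd cs) \<in> E\<^sup>*"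
    using \<open>heavy_chain E d j v\<close> unfolding heavy_chain_def by blast
  then have "cs \<noteq> []" using assms(2) by auto
  then have "v = hd cs"
    using cs below at_head[OF cs(3,2)] by (auto simp: rtrancl_eq_or_trancl)
  then show "d \<le> degree E v" using cs(2) \<open>cs \<noteq> []\<close> by simp
  show "\<not> heavy_chain E d (Suc j) v"
  proof
    assume "heavy_chain E d (Suc j) v"
    then obtain bs where bs: "length bs = Suc j" "\<forall>c\<in>set bs. d \<le> degree E c"
        "sorted_wrt (\<lambda>a b. (a, b) \<in> E\<^sup>+) bs" "bs \<noteq> [] \<longrightarrow> (v, hd bs) \<in> E\<^sup>*"
      unfolding heavy_chain_def by blast
    then obtain b0 b1 rest where bs_def: "bs = b0 # b1 # rest"
      using assms(2) by (cases bs; cases "tl bs") auto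
    then have "(v, b1) \<in> E\<^sup>+" using bs(3,4) by (auto intro: rtrancl_trancl_trancl)
    moreover have "heavy_chain E d j b1" using at_head[of "b1 # rest"] bs bs_def by simp
    ultimately show False by (rule below)
  qed
qed

lemma chain_core_leaves_disjoint:
  assumes "rooted_tree V E r" "1 \<le> i" "1 \<le> j" "i \<noteq> j"
  shows "leaves (chain_core V E d i) (E \<inter> chain_core V E d i \<times> chain_core V E d i) \<inter>
    leaves (chain_core V E d j) (E \<inter> chain_core V E d j \<times> chain_core V E d j) = {}"
proof -
  have False if "1 \<le> i" "i < j"
    and "v \<in> leaves (chain_core V E d i) (E \<inter> chain_core V E d i \<times> chain_core V E d i)"
    and "v \<in> leaves (chain_core V E d j) (E \<inter> chain_core V E d j \<times> chain_core V E d j)" for v i j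
  proof -
    have "heavy_chain E d j v" using that(4) unfolding leaves_def chain_core_def by blast
    then have "heavy_chain E d (Suc i) v" using heavy_chain_shorter that(2) by (metis Suc_leI)
    then show False using chain_core_leaf(2)[OF assms(1) that(1,3)] by contradiction
  qed
  then show ?thesis using assms(2-4) by (metis disjoint_iff linorder_neqE_nat)
qed

lemma embedding_into_chain_core:
  assumes "universal n V E r" "d \<ge> 2" "rooted_tree V' E' r'" "\<forall>v\<in>V'. degree E' v \<noteq> 1"
    "card (leaves V' E') * (Suc j * (d - 1) + 1) \<le> n"
  obtains f where "nca_embedding f V' E' V E" "f ` V' \<subseteq> chain_core V E d (Suc j)"
proof -
  have T: "rooted_tree V E r" using assms(1) unfolding universal_def by blast
  obtain V2 E2 where G: "rooted_tree V2 E2 r'" "tree_extension V' E' V2 E2" "card (leaves V2 E2) = n"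
      "\<forall>v\<in>V2. degree E2 v \<noteq> 1" "\<forall>l\<in>leaves V' E'. heavy_chain E2 d (Suc j) l"
    using grow_tree[OF assms(3,4,2,5)] by metis
  then obtain f where f: "nca_embedding f V2 E2 V E"
    using assms(1) unfolding universal_def top_minor_iff_nca_embedding by blast
  have "f x \<in> chain_core V E d (Suc j)" if x: "x \<in> V'" for x
  proof -
    obtain l where l: "l \<in> leaves V' E'" "(x, l) \<in> E'\<^sup>*"
      using rooted_tree_leaf_below[OF assms(3) x] by blast
    have sub: "V' \<subseteq> V2" "E' \<subseteq> E2" using G(2) unfolding tree_extension_def by auto
    then have "l \<in> V2" "x \<in> V2" using l(1) x unfolding leaves_def by auto
    then have "heavy_chain E d (Suc j) (f l)" "f l \<in> V"
      using nca_embedding_heavy_chain[OF T f G(1)] G(5) l(1) assms(2) f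
      unfolding nca_embedding_def by auto
    moreover have "(f x, f l) \<in> E\<^sup>*"
      using nca_embedding_ancestor[OF T f G(1) \<open>x \<in> V2\<close> \<open>l \<in> V2\<close>] l(2) rtrancl_mono[OF sub(2)]
      by blast
    ultimately show ?thesis
      using chain_core_ancestor_closed[OF T] unfolding ancestor_closed_def chain_core_def by blast
  qed
  then show ?thesis using that nca_embedding_tree_extension[OF assms(3) G(2) f] by blast
qed

lemma universal_chain_core:
  assumes "universal n V E r" "d \<ge> 2" "j \<ge> 1" "j * (d - 1) + 1 \<le> n"
  shows "universal (n div (j * (d - 1) + 1)) (chain_core V E d j)
    (E \<inter> chain_core V E d j \<times> chain_core V E d j) r"
proof -
  let ?m = "n div (j * (d - 1) + 1)" and ?W = "chain_core V E d j"
  have T: "rooted_tree V E r" using assms(1) unfolding universal_def by blast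
  obtain i where j: "j = Suc i" using assms(3) by (cases j) auto
  have "?m * (j * (d - 1) + 1) \<le> n" by (rule div_times_less_eq_dividend)
  have embed: "\<exists>f. nca_embedding f V' E' V E \<and> f ` V' \<subseteq> ?W"
    if T': "rooted_tree V' E' r'" "card (leaves V' E') = ?m" "\<forall>v\<in>V'. degree E' v \<noteq> 1" for V' E' r'
  proof -
    have "card (leaves V' E') * (Suc i * (d - 1) + 1) \<le> n"
      using \<open>?m * (j * (d - 1) + 1) \<le> n\<close> T'(2) j by simp
    then obtain f where "nca_embedding f V' E' V E" "f ` V' \<subseteq> chain_core V E d (Suc i)"
      by (rule embedding_into_chain_core[OF assms(1,2) T'(1,3)])
    then show ?thesis using j by blast
  qed
  have "?m \<ge> 1" using assms(4) by (simp add: Suc_le_eq div_greater_zero_iff)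
  then obtain V0 E0 r0 where
    "rooted_tree V0 E0 r0" "card (leaves V0 E0) = ?m" "\<forall>v\<in>V0. degree E0 v \<noteq> 1"
    by (rule exists_tree_without_unary_nodes)
  then have ne: "?W \<noteq> {}" using embed rooted_treeD(2) by blast
  have sub: "?W \<subseteq> V" unfolding chain_core_def by blast
  note closed = chain_core_ancestor_closed[OF T, of d j]
  show ?thesis
    unfolding universal_def
  proof (intro conjI allI impI)
    show "rooted_tree ?W (E \<inter> ?W \<times> ?W) r" by (rule rooted_tree_restrict(1)[OF T sub ne closed])
    fix V' E' r'
    assume "rooted_tree V' E' r' \<and> card (leaves V' E') = ?m \<and> (\<forall>v\<in>V'. degree E' v \<noteq> 1)"
    then obtain f where "nca_embedding f V' E' V E" "f ` V' \<subseteq> ?W" using embed by blast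
    then have "nca_embedding f V' E' ?W (E \<inter> ?W \<times> ?W)"
      by (rule nca_embedding_restrict_range[OF T sub ne closed])
    then show "top_minor V' E' ?W (E \<inter> ?W \<times> ?W)" unfolding top_minor_iff_nca_embedding by blast
  qed
qed

lemma u_le_card_leaves:
  assumes "universal m V E r"
  shows "u m \<le> card (leaves V E)"
  unfolding u_def using assms by (intro Least_le) blast

lemma sum_le_card_of_disjoint_subsets:
  assumes "finite I" "finite D" "\<And>i. i \<in> I \<Longrightarrow> L i \<subseteq> D"
    "\<And>i. i \<in> I \<Longrightarrow> f i \<le> card (L i)"
    "\<And>i j. i \<in> I \<Longrightarrow> j \<in> I \<Longrightarrow> i \<noteq> j \<Longrightarrow> L i \<inter> L j = {}"
  shows "sum f I \<le> card D"
proof -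
  have "sum f I \<le> (\<Sum>i\<in>I. card (L i))" using assms(4) by (rule sum_mono)
  also have "\<dots> = card (\<Union>i\<in>I. L i)"
    using assms(1,2,3,5) finite_subset by (intro card_UN_disjoint[symmetric]) blast+
  also have "\<dots> \<le> card D" using assms(2,3) by (intro card_mono) blast+
  finally show ?thesis .
qed

theorem lemma6:
  fixes n d :: nat and V :: "nat set" and E :: "(nat \<times> nat) set" and r :: nat
  assumes "n \<ge> 1" and "d \<ge> 2"
    and "universal n V E r"
  shows "card {v \<in> V. degree E v \<ge> d} \<ge>
           (\<Sum>s\<in>{s. s \<ge> 2 \<and> (s - 1) * (d - 1) + 1 \<le> n}. u (n div ((s - 1) * (d - 1) + 1)))"
proof -
  let ?I = "{s. s \<ge> 2 \<and> (s - 1) * (d - 1) + 1 \<le> n}"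
  let ?W = "\<lambda>s. chain_core V E d (s - 1)"
  let ?L = "\<lambda>s. leaves (?W s) (E \<inter> ?W s \<times> ?W s)"
  have T: "rooted_tree V E r" using assms(3) unfolding universal_def by blast
  have "?I \<subseteq> {..n}"
  proof
    fix s assume "s \<in> ?I"
    then have "(s - 1) * (d - 1) + 1 \<le> n" by simp
    moreover have "s - 1 \<le> (s - 1) * (d - 1)" using assms(2) mult_le_mono2[of 1 "d - 1" "s - 1"] by linarith
    ultimately show "s \<in> {..n}" unfolding atMost_iff by linarith
  qed
  then have "finite ?I" by (rule finite_subset) simp
  moreover have "finite {v \<in> V. degree E v \<ge> d}" using rooted_treeD(1)[OF T] by simp
  moreover have "?L s \<subseteq> {v \<in> V. degree E v \<ge> d}" if "s \<in> ?I" for s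
    using chain_core_leaf(1)[OF T, of "s - 1"] that unfolding leaves_def chain_core_def by auto
  moreover have "u (n div ((s - 1) * (d - 1) + 1)) \<le> card (?L s)" if "s \<in> ?I" for s
  proof -
    have "s - 1 \<ge> 1" "(s - 1) * (d - 1) + 1 \<le> n" using that by auto
    then show ?thesis by (rule u_le_card_leaves[OF universal_chain_core[OF assms(3,2)]])
  qed
  moreover have "?L s \<inter> ?L t = {}" if "s \<in> ?I" "t \<in> ?I" "s \<noteq> t" for s t
    using that by (intro chain_core_leaves_disjoint[OF T]) auto
  ultimately show ?thesis by (rule sum_le_card_of_disjoint_subsets)
qed

end
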